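(* Let $K\ge2$ and $\theta=K$. Let $(P_1^K,\dots,P_K^K)$ be the descending order statistics of a random vector uniformly distributed on the simplex $\{(x_1,\dots,x_K): x_i\ge0,\ \sum_{i=1}^K x_i=1\}$ (i.e. a symmetric $\mathrm{Dirichlet}(\frac\theta K,\dots,\frac\theta K)=\mathrm{Dirichlet}(1,\dots,1)$ vector). Fix $r\ge1$. Then, as $\theta=K\to\infty$, the family of laws of $(P_1^K,\dots,P_r^K)$ satisfies an LDP on $$\nabla_r=\Big\{(q_1,\dots,q_r):0\le q_r\le\dots\le q_1,\ \sum_{i=1}^r q_i\le1\Big\}$$ with speed $\theta$ and rate function $$S_r(p_1,\dots,p_r)=\begin{cases}\log\dfrac{1}{1-\sum_{k=1}^r p_k},&\sum_{k=1}^r p_k<1,\\ \infty,&\text{otherwise.}\end{cases}$$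
   Context: An LDP with speed $\theta$ means the bounds $\limsup\theta^{-1}\log P(F)\le-\inf_F S_r$ for closed $F$ and $\liminf\theta^{-1}\log P(G)\ge-\inf_G S_r$ for open $G$, as $\theta\to\infty$. *)

theory Defs
  imports "HOL-Probability.Probability"
begin

text \<open>Points of R^K are represented as functions nat => real (coordinates 0..K-1).
  The simplex projected onto its first K-1 coordinates.\<close>
definition proj_simplex :: "nat \<Rightarrow> (nat \<Rightarrow> real) set" where
  "proj_simplex K = {x \<in> space (PiM {..<K-1} (\<lambda>_. lborel)).
      (\<forall>i<K-1. 0 \<le> x i) \<and> (\<Sum>i<K-1. x i) \<le> 1}"

text \<open>Uniform distribution on the simplex {x : x_i >= 0, sum x_i = 1} in R^K:
  uniform measure on the projected simplex, lifted by setting the last coordinate.\<close>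
definition unif_simplex :: "nat \<Rightarrow> (nat \<Rightarrow> real) measure" where
  "unif_simplex K = distr (uniform_measure (PiM {..<K-1} (\<lambda>_. lborel)) (proj_simplex K))
      (PiM {..<K} (\<lambda>_. lborel)) (\<lambda>x. x(K-1 := 1 - (\<Sum>i<K-1. x i)))"

text \<open>The r largest coordinates in descending order (P_1,...,P_r), stored at
  indices 0..r-1; all other coordinates are 0.\<close>
definition top_stats :: "nat \<Rightarrow> nat \<Rightarrow> (nat \<Rightarrow> real) \<Rightarrow> (nat \<Rightarrow> real)" where
  "top_stats r K x = (\<lambda>i. if i < r then rev (sort (map x [0..<K])) ! i else 0)"

definition law_top :: "nat \<Rightarrow> nat \<Rightarrow> (nat \<Rightarrow> real) measure" where
  "law_top r K = distr (unif_simplex K) borel (top_stats r K)"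

definition nabla :: "nat \<Rightarrow> (nat \<Rightarrow> real) set" where
  "nabla r = {q. (\<forall>i\<ge>r. q i = 0) \<and> 0 \<le> q (r-1) \<and> (\<forall>i. Suc i < r \<longrightarrow> q (Suc i) \<le> q i)
                 \<and> (\<Sum>i<r. q i) \<le> 1}"

definition rate :: "nat \<Rightarrow> (nat \<Rightarrow> real) \<Rightarrow> ereal" where
  "rate r p = (if (\<Sum>k<r. p k) < 1 then ereal (ln (1 / (1 - (\<Sum>k<r. p k)))) else \<infinity>)"

definition elog :: "real \<Rightarrow> ereal" where
  "elog x = (if 0 < x then ereal (ln x) else -\<infinity>)"

definition LDP :: "'a::topological_space set \<Rightarrow> (nat \<Rightarrow> 'a measure) \<Rightarrow> (nat \<Rightarrow> real)
                   \<Rightarrow> ('a \<Rightarrow> ereal) \<Rightarrow> bool" where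
  "LDP X \<mu> \<theta> S \<longleftrightarrow>
     (\<forall>F. closedin (top_of_set X) F \<longrightarrow>
         limsup (\<lambda>n. ereal (1 / \<theta> n) * elog (measure (\<mu> n) F)) \<le> - (INF x\<in>F. S x)) \<and>
     (\<forall>G. openin (top_of_set X) G \<longrightarrow>
         liminf (\<lambda>n. ereal (1 / \<theta> n) * elog (measure (\<mu> n) G)) \<ge> - (INF x\<in>G. S x))"

end

theory Submission
  imports Defs "HOL-Combinatorics.Permutations" "HOL-Real_Asymp.Real_Asymp"
begin

(*
  For a >= 0 with a_1 + ... + a_K < 1, the part {x >= a} of the simplex is a translate of the
  simplex scaled by 1 - \<Sum>a, so a uniform point lies in it with probability (1 - \<Sum>a)^(K-1).

  Upper bound: if P_1 + ... + P_r >= c, then the r largest coordinates dominate a point of the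
  grid (d\<nat>)^r put at r distinct positions, with grid sum at least c - r d.  A union bound over
  at most (1/d + 1)^r K^r such orthants gives probability <= poly(K) (1 - c + r d)^(K-1).

  Lower bound: on the cell {q <= x < q + d} the top r order statistics are within d of q, and
  removing from {x >= q} the K orthants {x >= q + d e_k} shows that the cell has probability
  at least (1 - s)^(K-1) - K (1 - s - d)^(K-1), where s = q_1 + ... + q_r.

  Taking (1/K) log and letting d -> 0 gives the rate log (1 / (1 - s)) on both sides.
*)

section \<open>Order statistics of lists\<close>

lemma sorted_nth_le_iff_card_gt:
  fixes ys :: "'a::linorder list"
  assumes srt: "sorted ys" and k: "k < length ys"
  shows "ys ! (length ys - 1 - k) \<le> t \<longleftrightarrow> card {i. i < length ys \<and> t < ys ! i} \<le> k"
proof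
  define n where "n = length ys"
  assume le: "ys ! (length ys - 1 - k) \<le> t"
  have "{i. i < n \<and> t < ys ! i} \<subseteq> {n-k..<n}"
  proof
    fix i assume i: "i \<in> {i. i < n \<and> t < ys ! i}"
    have "\<not> i \<le> n - 1 - k"
    proof
      assume "i \<le> n - 1 - k"
      then have "ys ! i \<le> ys ! (n-1-k)" using srt k by (intro sorted_nth_mono) (auto simp: n_def)
      then show False using le i by (auto simp: n_def)
    qed
    then show "i \<in> {n-k..<n}" using i k by (auto simp: n_def)
  qed
  then have "card {i. i < n \<and> t < ys ! i} \<le> card {n-k..<n}" by (intro card_mono) auto
  then show "card {i. i < length ys \<and> t < ys ! i} \<le> k" using k by (simp add: n_def)
next
  define n where "n = length ys"
  assume le: "card {i. i < length ys \<and> t < ys ! i} \<le> k"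
  show "ys ! (length ys - 1 - k) \<le> t"
  proof (rule ccontr)
    assume "\<not> ys ! (length ys - 1 - k) \<le> t"
    then have gt: "t < ys ! (n-1-k)" by (simp add: n_def)
    have "{n-1-k..<n} \<subseteq> {i. i < n \<and> t < ys ! i}"
    proof
      fix i assume i: "i \<in> {n-1-k..<n}"
      then have "ys ! (n-1-k) \<le> ys ! i" using srt by (intro sorted_nth_mono) (auto simp: n_def)
      then show "i \<in> {i. i < n \<and> t < ys ! i}" using gt i by auto
    qed
    then have "card {n-1-k..<n} \<le> card {i. i < n \<and> t < ys ! i}" by (intro card_mono) auto
    then show False using le k by (simp add: n_def)
  qed
qed

lemma rev_sort_nth_le_iff:
  fixes xs :: "'a::linorder list"
  assumes k: "k < length xs"
  shows "rev (sort xs) ! k \<le> t \<longleftrightarrow> length (filter (\<lambda>y. t < y) xs) \<le> k"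
proof -
  have "length (filter (\<lambda>y. t < y) xs) = length (filter (\<lambda>y. t < y) (sort xs))"
    by (metis mset_eq_length mset_filter mset_sort)
  also have "\<dots> = card {i. i < length xs \<and> t < sort xs ! i}"
    by (simp add: length_filter_conv_card)
  finally show ?thesis
    using sorted_nth_le_iff_card_gt[of "sort xs" k t] k by (simp add: rev_nth)
qed

lemma rev_sort_nth_le_add:
  fixes us vs :: "real list"
  assumes len: "length us = length vs" and k: "k < length vs"
    and close: "\<And>i. i < length vs \<Longrightarrow> \<bar>us ! i - vs ! i\<bar> \<le> e"
  shows "rev (sort us) ! k \<le> rev (sort vs) ! k + e"
proof -
  define t where "t = rev (sort vs) ! k"
  have "length (filter (\<lambda>y. t + e < y) us) = card {i. i < length vs \<and> t + e < us ! i}"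
    by (simp add: length_filter_conv_card len)
  also have "\<dots> \<le> card {i. i < length vs \<and> t < vs ! i}"
    using close by (intro card_mono) fastforce+
  also have "\<dots> = length (filter (\<lambda>y. t < y) vs)"
    by (simp add: length_filter_conv_card)
  also have "\<dots> \<le> k"
    using rev_sort_nth_le_iff[OF k, of t] by (simp add: t_def)
  finally show ?thesis
    using rev_sort_nth_le_iff[of k us "t + e"] k len by (simp add: t_def)
qed

lemma rev_sort_nth_antimono:
  fixes xs :: "'a::linorder list"
  assumes "i \<le> j" "j < length xs"
  shows "rev (sort xs) ! j \<le> rev (sort xs) ! i"
  using assms by (simp add: rev_nth) (intro sorted_nth_mono, auto)

lemma rev_sort_eq_permute:
  obtains p where "p permutes {..<length xs}" "\<And>i. i < length xs \<Longrightarrow> rev (sort xs) ! i = xs ! p i"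
proof -
  have "mset (rev (sort xs)) = mset xs" by simp
  then obtain p where p: "p permutes {..<length xs}" "permute_list p xs = rev (sort xs)"
    by (rule mset_eq_permutation)
  then have "rev (sort xs) ! i = xs ! p i" if "i < length xs" for i
    using that by (metis permute_list_nth)
  with p(1) show ?thesis using that by blast
qed

section \<open>Affine changes of variables in product Lebesgue measure\<close>

lemma emeasure_lborel_affine_vimage:
  fixes t a :: real
  assumes t: "t > 0" and A: "A \<in> sets borel"
  shows "emeasure lborel {x. (x - a) / t \<in> A} = ennreal t * emeasure lborel A"
proof -
  have B: "{x. (x - a) / t \<in> A} \<in> sets borel"
    using measurable_sets[of "\<lambda>x::real. (x - a) / t" borel borel A] A by (simp add: vimage_def)
  have "emeasure lborel {x. (x - a) / t \<in> A} =
      emeasure (density (distr lborel borel (\<lambda>x. a + t * x)) (\<lambda>_. ennreal \<bar>t\<bar>)) {x. (x - a) / t \<in> A}"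
    using lborel_real_affine[of t a] t by simp
  also have "\<dots> = ennreal t * emeasure (distr lborel borel (\<lambda>x. a + t * x)) {x. (x - a) / t \<in> A}"
    using B t by (subst emeasure_density_const) auto
  also have "\<dots> = ennreal t * emeasure lborel ((\<lambda>x. a + t * x) -` {x. (x - a) / t \<in> A} \<inter> space lborel)"
    using B by (subst emeasure_distr) auto
  also have "(\<lambda>x. a + t * x) -` {x. (x - a) / t \<in> A} \<inter> space lborel = A"
    using t by auto
  finally show ?thesis .
qed

lemma density_distr_PiM_lborel_affine:
  fixes a :: "'i \<Rightarrow> real"
  assumes t: "t > 0" and I: "finite I"
  shows "density (distr (PiM I (\<lambda>_. lborel)) (PiM I (\<lambda>_. lborel)) (\<lambda>z. \<lambda>k\<in>I. (z k - a k) / t))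
           (\<lambda>_. ennreal (1 / t ^ card I)) = PiM I (\<lambda>_. lborel)"
    (is "density ?D (\<lambda>_. ?c) = ?M")
proof -
  interpret product_sigma_finite "\<lambda>_::'i. lborel::real measure" by standard
  show ?thesis
  proof (rule PiM_eqI[OF I])
  show "sets (density ?D (\<lambda>_. ?c)) = sets ?M" by simp
  fix A :: "'i \<Rightarrow> real set" assume A: "\<And>i. i \<in> I \<Longrightarrow> A i \<in> sets lborel"
  have box: "Pi\<^sub>E I A \<in> sets ?M" using A I by (intro sets_PiM_I_finite) auto
  have g: "(\<lambda>z. \<lambda>k\<in>I. (z k - a k) / t) \<in> measurable ?M ?M" by measurable
  have vimage: "(\<lambda>z. \<lambda>k\<in>I. (z k - a k) / t) -` Pi\<^sub>E I A \<inter> space ?M = Pi\<^sub>E I (\<lambda>i. {x. (x - a i) / t \<in> A i})"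
    by (auto simp: space_PiM PiE_def Pi_def extensional_def)
  have sets_vimage: "{x. (x - a i) / t \<in> A i} \<in> sets lborel" if "i \<in> I" for i
    using measurable_sets[of "\<lambda>x::real. (x - a i) / t" borel borel "A i"] A that by (simp add: vimage_def)
  have "emeasure (density ?D (\<lambda>_. ?c)) (Pi\<^sub>E I A) = ?c * emeasure ?M (Pi\<^sub>E I (\<lambda>i. {x. (x - a i) / t \<in> A i}))"
    using box g by (simp add: emeasure_density_const emeasure_distr vimage)
  also have "\<dots> = ?c * (\<Prod>i\<in>I. ennreal t * emeasure lborel (A i))"
    using I A t sets_vimage by (simp add: emeasure_PiM emeasure_lborel_affine_vimage)
  also have "\<dots> = (?c * ennreal (t ^ card I)) * (\<Prod>i\<in>I. emeasure lborel (A i))"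
    using t by (simp add: prod.distrib ennreal_power mult.assoc)
  also have "?c * ennreal (t ^ card I) = 1"
    using t by (simp add: ennreal_mult''[symmetric])
  finally show "emeasure (density ?D (\<lambda>_. ?c)) (Pi\<^sub>E I A) = (\<Prod>i\<in>I. emeasure lborel (A i))"
    by (simp only: mult_1)
  qed
qed

lemma emeasure_PiM_lborel_affine_vimage:
  fixes a :: "'i \<Rightarrow> real"
  assumes t: "t > 0" and I: "finite I" and S: "S \<in> sets (PiM I (\<lambda>_. lborel))"
  shows "emeasure (PiM I (\<lambda>_. lborel)) {z \<in> space (PiM I (\<lambda>_. lborel)). (\<lambda>k\<in>I. (z k - a k) / t) \<in> S}
         = ennreal (t ^ card I) * emeasure (PiM I (\<lambda>_. lborel)) S"
proof -
  let ?M = "PiM I (\<lambda>_. lborel::real measure)" and ?g = "\<lambda>z. \<lambda>k\<in>I. (z k - a k) / t"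
  have g: "?g \<in> measurable ?M ?M" by measurable
  have "emeasure ?M S = ennreal (1 / t ^ card I) * emeasure (distr ?M ?M ?g) S"
    using S by (subst density_distr_PiM_lborel_affine[OF t I, of a, symmetric])
      (simp add: emeasure_density_const)
  moreover have "ennreal (t ^ card I) * ennreal (1 / t ^ card I) = 1"
    using t by (simp add: ennreal_mult''[symmetric])
  ultimately have "ennreal (t ^ card I) * emeasure ?M S = emeasure (distr ?M ?M ?g) S"
    by (simp add: mult.assoc[symmetric])
  also have "\<dots> = emeasure ?M {z \<in> space ?M. ?g z \<in> S}"
    using S g by (simp add: emeasure_distr vimage_def Int_def conj_commute)
  finally show ?thesis by simp
qed

section \<open>The uniform distribution on the simplex\<close>

abbreviation lborelPi :: "nat \<Rightarrow> (nat \<Rightarrow> real) measure" where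
  "lborelPi n \<equiv> PiM {..<n} (\<lambda>_. lborel)"

definition simplex_lift :: "nat \<Rightarrow> (nat \<Rightarrow> real) \<Rightarrow> nat \<Rightarrow> real" where
  "simplex_lift K = (\<lambda>x. x(K-1 := 1 - (\<Sum>i<K-1. x i)))"

definition prob_simplex :: "nat \<Rightarrow> (nat \<Rightarrow> real) set" where
  "prob_simplex K = {x \<in> space (lborelPi K). (\<forall>k<K. 0 \<le> x k) \<and> (\<Sum>k<K. x k) = 1}"

definition orthant :: "nat \<Rightarrow> (nat \<Rightarrow> real) \<Rightarrow> (nat \<Rightarrow> real) set" where
  "orthant K a = {x \<in> space (lborelPi K). \<forall>k<K. a k \<le> x k}"

lemma unif_simplex_eq_distr_lift:
  "unif_simplex K = distr (uniform_measure (lborelPi (K-1)) (proj_simplex K)) (lborelPi K) (simplex_lift K)"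
  by (simp add: unif_simplex_def simplex_lift_def)

lemma sets_unif_simplex [simp]: "sets (unif_simplex K) = sets (lborelPi K)"
  by (simp add: unif_simplex_eq_distr_lift)

lemma space_unif_simplex [simp]: "space (unif_simplex K) = space (lborelPi K)"
  by (simp add: unif_simplex_eq_distr_lift)

lemma sets_proj_simplex: "proj_simplex K \<in> sets (lborelPi (K-1))"
  unfolding proj_simplex_def by measurable

lemma sets_prob_simplex: "prob_simplex K \<in> sets (lborelPi K)"
  unfolding prob_simplex_def by measurable

lemma sets_orthant: "orthant K a \<in> sets (lborelPi K)"
  unfolding orthant_def by measurable

lemma measurable_simplex_lift:
  assumes K: "K \<ge> 1"
  shows "simplex_lift K \<in> measurable (lborelPi (K-1)) (lborelPi K)"
proof -
  have "(\<lambda>x. simplex_lift K x i) \<in> borel_measurable (lborelPi (K-1))" if "i < K" for i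
  proof (cases "i = K - 1")
    case True
    then show ?thesis unfolding simplex_lift_def by simp
  next
    case False
    then have "(\<lambda>x. simplex_lift K x i) = (\<lambda>x. x i)" by (auto simp: simplex_lift_def)
    then show ?thesis using False that by simp
  qed
  then show ?thesis
    using K by (intro measurable_PiM_single') (auto simp: space_PiM simplex_lift_def PiE_def extensional_def)
qed

lemma emeasure_proj_simplex_finite: "emeasure (lborelPi (K-1)) (proj_simplex K) \<noteq> \<infinity>"
proof -
  interpret product_sigma_finite "\<lambda>_::nat. lborel::real measure" by standard
  have "proj_simplex K \<subseteq> PiE {..<K-1} (\<lambda>_. {0..1})"
  proof
    fix x assume x: "x \<in> proj_simplex K"
    then have x0: "\<forall>i<K-1. 0 \<le> x i" and x1: "(\<Sum>i<K-1. x i) \<le> 1"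
      by (auto simp: proj_simplex_def)
    have "x i \<le> 1" if "i < K - 1" for i
      using member_le_sum[of i "{..<K-1}" x] that x0 x1 by auto
    then show "x \<in> PiE {..<K-1} (\<lambda>_. {0..1})"
      using x x0 by (auto simp: proj_simplex_def space_PiM PiE_def)
  qed
  then have "emeasure (lborelPi (K-1)) (proj_simplex K) \<le> emeasure (lborelPi (K-1)) (PiE {..<K-1} (\<lambda>_. {0..1}))"
    by (intro emeasure_mono) auto
  also have "\<dots> = 1" by (subst emeasure_PiM) auto
  finally show ?thesis by (auto simp: top_unique)
qed

lemma emeasure_proj_simplex_nonzero: "emeasure (lborelPi (K-1)) (proj_simplex K) \<noteq> 0"
proof -
  interpret product_sigma_finite "\<lambda>_::nat. lborel::real measure" by standard
  define c where "c = 1 / real (max 1 (K-1))"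
  have c: "c > 0" by (simp add: c_def)
  have "PiE {..<K-1} (\<lambda>_. {0..c}) \<subseteq> proj_simplex K"
  proof
    fix x assume x: "x \<in> PiE {..<K-1} (\<lambda>_. {0..c})"
    have "(\<Sum>i<K-1. x i) \<le> (\<Sum>i<K-1. c)" using PiE_mem[OF x] by (intro sum_mono) auto
    also have "\<dots> = real (K-1) * c" by simp
    also have "\<dots> \<le> 1" by (simp add: c_def field_simps)
    finally show "x \<in> proj_simplex K" using x by (auto simp: proj_simplex_def space_PiM PiE_def)
  qed
  then have "emeasure (lborelPi (K-1)) (PiE {..<K-1} (\<lambda>_. {0..c})) \<le> emeasure (lborelPi (K-1)) (proj_simplex K)"
    by (intro emeasure_mono sets_proj_simplex)
  moreover have "emeasure (lborelPi (K-1)) (PiE {..<K-1} (\<lambda>_. {0..c})) = ennreal (c ^ (K-1))"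
    using c by (subst emeasure_PiM) (auto simp: ennreal_power)
  ultimately show ?thesis using c by (auto simp: top_unique)
qed

lemma prob_space_unif_simplex: "K \<ge> 1 \<Longrightarrow> prob_space (unif_simplex K)"
  unfolding unif_simplex_eq_distr_lift
  by (intro prob_space.prob_space_distr prob_space_uniform_measure emeasure_proj_simplex_finite
      emeasure_proj_simplex_nonzero)
     (subst measurable_cong_sets[OF sets_uniform_measure refl], rule measurable_simplex_lift)

lemma measure_unif_simplex:
  assumes K: "K \<ge> 1" and E: "E \<in> sets (lborelPi K)"
  shows "measure (unif_simplex K) E =
    measure (lborelPi (K-1)) (proj_simplex K \<inter> (simplex_lift K -` E \<inter> space (lborelPi (K-1))))
    / measure (lborelPi (K-1)) (proj_simplex K)"
proof -
  have "measure (unif_simplex K) E =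
      measure (uniform_measure (lborelPi (K-1)) (proj_simplex K)) (simplex_lift K -` E \<inter> space (lborelPi (K-1)))"
    unfolding unif_simplex_eq_distr_lift using E measurable_simplex_lift[OF K]
    by (subst measure_distr) (auto simp: measurable_cong_sets[OF sets_uniform_measure refl])
  then show ?thesis
    using measurable_sets[OF measurable_simplex_lift[OF K] E]
      emeasure_proj_simplex_finite emeasure_proj_simplex_nonzero
    by simp
qed

lemma proj_simplex_Int_vimage_orthant:
  assumes K: "K = Suc n" and a0: "\<And>k. k < K \<Longrightarrow> 0 \<le> a k" and t: "t = 1 - (\<Sum>k<K. a k)" "0 < t"
  shows "proj_simplex K \<inter> (simplex_lift K -` orthant K a \<inter> space (lborelPi (K-1))) =
    {z \<in> space (lborelPi (K-1)). (\<lambda>k\<in>{..<K-1}. (z k - a k) / t) \<in> proj_simplex K}"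
proof -
  have lift: "simplex_lift K z k = (if k < n then z k else 1 - (\<Sum>i<n. z i))" if "k < K" for z k
    using that K by (simp add: simplex_lift_def)
  have "z \<in> proj_simplex K \<and> simplex_lift K z \<in> orthant K a \<longleftrightarrow>
        (\<forall>k<n. a k \<le> z k) \<and> (\<Sum>k<n. z k) + a n \<le> 1"
    if z: "z \<in> space (lborelPi n)" for z
  proof -
    have "simplex_lift K z \<in> space (lborelPi K)"
      using measurable_space[OF measurable_simplex_lift] z K by simp
    then have "simplex_lift K z \<in> orthant K a \<longleftrightarrow> (\<forall>k<n. a k \<le> z k) \<and> a n \<le> 1 - (\<Sum>i<n. z i)"
      unfolding orthant_def using K lift by (auto simp: less_Suc_eq)
    moreover have "(\<forall>k<n. a k \<le> z k) \<Longrightarrow> (\<forall>k<n. 0 \<le> z k)"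
      using a0 K by (meson less_SucI order_trans)
    moreover have "0 \<le> a n" using a0 K by simp
    ultimately show ?thesis using z K by (auto simp: proj_simplex_def)
  qed
  moreover have "(\<lambda>k\<in>{..<n}. (z k - a k) / t) \<in> proj_simplex K \<longleftrightarrow>
        (\<forall>k<n. a k \<le> z k) \<and> (\<Sum>k<n. z k) + a n \<le> 1" for z
  proof -
    have "(\<Sum>k<n. (z k - a k) / t) = ((\<Sum>k<n. z k) - (\<Sum>k<n. a k)) / t"
      by (simp add: sum_divide_distrib[symmetric] sum_subtractf)
    moreover have "(\<Sum>k<K. a k) = (\<Sum>k<n. a k) + a n" using K by simp
    ultimately show ?thesis
      using t K by (auto simp: proj_simplex_def space_PiM PiE_def extensional_def
          zero_le_divide_iff divide_le_eq_1)
  qed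
  ultimately show ?thesis using K by auto
qed

lemma measure_unif_simplex_orthant:
  assumes K: "K \<ge> 1" and a0: "\<And>k. k < K \<Longrightarrow> 0 \<le> a k" and a1: "(\<Sum>k<K. a k) < 1"
  shows "measure (unif_simplex K) (orthant K a) = (1 - (\<Sum>k<K. a k)) ^ (K - 1)"
proof -
  obtain n where n: "K = Suc n" using K by (cases K) auto
  define t where "t = 1 - (\<Sum>k<K. a k)"
  have t: "0 < t" using a1 by (simp add: t_def)
  have "proj_simplex K \<inter> (simplex_lift K -` orthant K a \<inter> space (lborelPi (K-1))) =
      {z \<in> space (lborelPi (K-1)). (\<lambda>k\<in>{..<K-1}. (z k - a k) / t) \<in> proj_simplex K}"
    using n a0 t_def t by (rule proj_simplex_Int_vimage_orthant)
  then have "emeasure (lborelPi (K-1)) (proj_simplex K \<inter> (simplex_lift K -` orthant K a \<inter> space (lborelPi (K-1))))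
      = ennreal (t ^ (K-1)) * emeasure (lborelPi (K-1)) (proj_simplex K)"
    using emeasure_PiM_lborel_affine_vimage[OF t finite_lessThan sets_proj_simplex[of K], where a=a] by simp
  then have "measure (lborelPi (K-1)) (proj_simplex K \<inter> (simplex_lift K -` orthant K a \<inter> space (lborelPi (K-1))))
      = t ^ (K-1) * measure (lborelPi (K-1)) (proj_simplex K)"
    using t by (simp add: measure_def enn2real_mult)
  moreover have "measure (lborelPi (K-1)) (proj_simplex K) \<noteq> 0"
    using emeasure_proj_simplex_finite emeasure_proj_simplex_nonzero
    by (simp add: measure_def enn2real_eq_0_iff)
  ultimately show ?thesis
    by (simp add: measure_unif_simplex[OF K sets_orthant] t_def)
qed

lemma AE_unif_simplex_prob_simplex:
  assumes K: "K \<ge> 1"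
  shows "AE x in unif_simplex K. x \<in> prob_simplex K"
proof -
  have "simplex_lift K z \<in> prob_simplex K" if z: "z \<in> proj_simplex K" for z
  proof -
    obtain n where n: "K = Suc n" using K by (cases K) auto
    have "simplex_lift K z \<in> space (lborelPi K)"
      using measurable_space[OF measurable_simplex_lift[OF K]] z by (simp add: proj_simplex_def)
    moreover have "(\<Sum>k<n. simplex_lift K z k) = (\<Sum>k<n. z k)"
      by (intro sum.cong) (auto simp: simplex_lift_def n)
    ultimately show ?thesis
      using z by (auto simp: prob_simplex_def proj_simplex_def simplex_lift_def n less_Suc_eq)
  qed
  then show ?thesis
    unfolding unif_simplex_eq_distr_lift
    using measurable_simplex_lift[OF K] sets_proj_simplex sets_prob_simplex
    by (subst AE_distr_iff)
       (auto simp: measurable_cong_sets[OF sets_uniform_measure refl] intro!: AE_uniform_measureI)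
qed

lemma measure_unif_simplex_mono:
  assumes K: "K \<ge> 1" and AB: "A \<inter> prob_simplex K \<subseteq> B" and B: "B \<in> sets (lborelPi K)"
  shows "measure (unif_simplex K) A \<le> measure (unif_simplex K) B"
proof -
  interpret prob_space "unif_simplex K" by (rule prob_space_unif_simplex[OF K])
  have "AE x in unif_simplex K. x \<in> A \<longrightarrow> x \<in> B"
    using AE_unif_simplex_prob_simplex[OF K] by eventually_elim (use AB in blast)
  then have "emeasure (unif_simplex K) A \<le> emeasure (unif_simplex K) B"
    using B by (intro emeasure_mono_AE) simp_all
  then show ?thesis
    unfolding measure_def by (rule enn2real_mono) (simp add: less_top[symmetric])
qed

section \<open>The top order statistics and the set nabla\<close>

lemma rev_sort_map_nth_le_iff:
  fixes x :: "nat \<Rightarrow> real"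
  assumes i: "i < K"
  shows "rev (sort (map x [0..<K])) ! i \<le> t \<longleftrightarrow> (\<Sum>j<K. if t < x j then 1 else 0::real) \<le> real i"
proof -
  have "length (filter (\<lambda>y. t < y) (map x [0..<K])) = card {j\<in>{..<K}. t < x j}"
    unfolding length_filter_conv_card by (intro arg_cong[where f=card]) auto
  also have "real \<dots> = (\<Sum>j<K. if t < x j then 1 else 0::real)"
    by (simp add: sum.inter_filter[symmetric])
  finally have count: "real (length (filter (\<lambda>y. t < y) (map x [0..<K]))) = (\<Sum>j<K. if t < x j then 1 else 0::real)" .
  have "rev (sort (map x [0..<K])) ! i \<le> t \<longleftrightarrow> length (filter (\<lambda>y. t < y) (map x [0..<K])) \<le> i"
    using rev_sort_nth_le_iff[of i "map x [0..<K]" t] i by simp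
  also have "\<dots> \<longleftrightarrow> real (length (filter (\<lambda>y. t < y) (map x [0..<K]))) \<le> real i"
    by (rule of_nat_le_iff[symmetric])
  finally show ?thesis unfolding count .
qed

lemma measurable_top_stats:
  assumes rK: "r \<le> K"
  shows "top_stats r K \<in> measurable (lborelPi K) borel"
proof -
  have comp: "(\<lambda>x. rev (sort (map x [0..<K])) ! i) \<in> borel_measurable (lborelPi K)" if "i < K" for i
  proof (subst borel_measurable_iff_le, intro allI)
    fix t
    have "{x \<in> space (lborelPi K). rev (sort (map x [0..<K])) ! i \<le> t} =
        {x \<in> space (lborelPi K). (\<Sum>j<K. if t < x j then 1 else 0::real) \<le> real i}"
      using rev_sort_map_nth_le_iff[OF that] by auto
    also have "\<dots> \<in> sets (lborelPi K)" by measurable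
    finally show "{x \<in> space (lborelPi K). rev (sort (map x [0..<K])) ! i \<le> t} \<in> sets (lborelPi K)" .
  qed
  then have "(\<lambda>x i. top_stats r K x i) \<in> measurable (lborelPi K) (PiM UNIV (\<lambda>_. borel))"
  proof (intro measurable_PiM_single')
    fix i
    show "(\<lambda>x. top_stats r K x i) \<in> borel_measurable (lborelPi K)"
      using comp rK by (cases "i < r") (auto simp: top_stats_def)
  qed auto
  then show ?thesis by (simp add: measurable_cong_sets[OF refl sets_PiM_equal_borel])
qed

lemma measure_law_top:
  assumes "r \<le> K" and "A \<in> sets borel"
  shows "measure (law_top r K) A = measure (unif_simplex K) (top_stats r K -` A \<inter> space (lborelPi K))"
  unfolding law_top_def using measurable_top_stats assms
  by (subst measure_distr) (auto simp: measurable_cong_sets[OF sets_unif_simplex refl])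

lemma top_stats_permutes:
  obtains p where "p permutes {..<K}" "\<And>i. i < K \<Longrightarrow> rev (sort (map x [0..<K])) ! i = x (p i)"
proof -
  obtain p where p: "p permutes {..<K}"
    "\<And>i. i < K \<Longrightarrow> rev (sort (map x [0..<K])) ! i = map x [0..<K] ! p i"
    using rev_sort_eq_permute[of "map x [0..<K]"] by auto
  show ?thesis
  proof (rule that[OF p(1)])
    fix i assume "i < K"
    then show "rev (sort (map x [0..<K])) ! i = x (p i)"
      using p(2) permutes_in_image[OF p(1)] by simp
  qed
qed

lemma top_stats_in_nabla:
  assumes r: "r \<ge> 1" and rK: "r \<le> K" and x: "x \<in> prob_simplex K"
  shows "top_stats r K x \<in> nabla r"
proof -
  obtain p where p: "p permutes {..<K}" "\<And>i. i < K \<Longrightarrow> rev (sort (map x [0..<K])) ! i = x (p i)"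
    using top_stats_permutes[of K x] by blast
  have x0: "\<And>k. k < K \<Longrightarrow> 0 \<le> x k" and x1: "(\<Sum>k<K. x k) = 1"
    using x by (auto simp: prob_simplex_def)
  have pK: "\<And>i. i < K \<Longrightarrow> p i < K" using permutes_in_image[OF p(1)] by simp
  have "0 \<le> top_stats r K x (r - 1)"
    using r rK p(2)[of "r-1"] x0[OF pK[of "r-1"]] by (simp add: top_stats_def)
  moreover have "\<forall>i. Suc i < r \<longrightarrow> top_stats r K x (Suc i) \<le> top_stats r K x i"
    using rK by (auto simp: top_stats_def intro!: rev_sort_nth_antimono)
  moreover have "(\<Sum>i<r. top_stats r K x i) \<le> 1"
  proof -
    have "(\<Sum>i<r. top_stats r K x i) = (\<Sum>i<r. x (p i))"
      using rK by (intro sum.cong) (auto simp: top_stats_def p(2))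
    also have "\<dots> = (\<Sum>k\<in>p ` {..<r}. x k)"
      using permutes_inj[OF p(1)] by (subst sum.reindex) (auto intro: inj_on_subset)
    also have "\<dots> \<le> (\<Sum>k<K. x k)"
      using pK rK x0 by (intro sum_mono2) auto
    finally show ?thesis using x1 by simp
  qed
  ultimately show ?thesis by (auto simp: nabla_def top_stats_def)
qed

lemma nabla_antimono:
  assumes q: "q \<in> nabla r" and "a \<le> b" "b < r"
  shows "q b \<le> q a"
  using assms(2,3)
proof (induction b rule: dec_induct)
  case (step n)
  then show ?case using q by (fastforce simp: nabla_def)
qed simp

lemma nabla_nonneg:
  assumes q: "q \<in> nabla r"
  shows "0 \<le> q k"
proof (cases "k < r")
  case True
  then have "q (r-1) \<le> q k" using nabla_antimono[OF q, of k "r-1"] by simp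
  moreover have "0 \<le> q (r-1)" using q by (simp add: nabla_def)
  ultimately show ?thesis by simp
qed (use q in \<open>simp add: nabla_def\<close>)

lemma rev_sort_map_nabla:
  assumes q: "q \<in> nabla r" and rK: "r \<le> K" and i: "i < K"
  shows "rev (sort (map q [0..<K])) ! i = q i"
proof -
  have antimono: "q b \<le> q a" if "a \<le> b" for a b
  proof (cases "b < r")
    case False
    then show ?thesis using q nabla_nonneg[OF q, of a] by (simp add: nabla_def)
  qed (use nabla_antimono[OF q that] in simp)
  have "sorted (rev (map q [0..<K]))"
    unfolding sorted_iff_nth_mono by (auto simp: rev_nth antimono)
  then have "sort (map q [0..<K]) = rev (map q [0..<K])" by (intro properties_for_sort) simp_all
  then show ?thesis using i by simp
qed

lemma closed_nabla: "closed (nabla r)"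
proof -
  have "nabla r = (\<Inter>i\<in>{i. r \<le> i}. {q. q i = 0}) \<inter> {q. 0 \<le> q (r - 1)} \<inter>
      (\<Inter>i\<in>{i. Suc i < r}. {q. q (Suc i) \<le> q i}) \<inter> {q. (\<Sum>i<r. q i) \<le> 1}"
    by (auto simp: nabla_def)
  moreover have coord: "continuous_on UNIV (\<lambda>q::nat\<Rightarrow>real. q i)" for i
    by simp
  ultimately show ?thesis
    by (auto intro!: closed_Int closed_INT closed_Collect_eq closed_Collect_le continuous_on_sum coord)
qed

lemma open_fun_coord_nbhd:
  fixes U :: "('i::countable \<Rightarrow> 'b::metric_space) set"
  assumes U: "open U" and q: "q \<in> U"
  obtains e I where "e > 0" "finite I" "\<And>y. (\<forall>i\<in>I. dist (y i) (q i) < e) \<Longrightarrow> y \<in> U"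
proof -
  obtain e where e: "e > 0" "\<And>y. dist y q < e \<Longrightarrow> y \<in> U"
    using U q by (auto simp: open_dist)
  obtain N where N: "(1/2::real) ^ N < e / 2"
    using real_arch_pow_inv[of "e/2" "1/2"] e by auto
  have "y \<in> U" if y: "\<forall>i\<in>from_nat ` {..N}. dist (y i) (q i) < e / 4" for y
  proof -
    define S where "S = {dist (y (from_nat n)) (q (from_nat n)) |n. n \<le> N}"
    have "Max S \<in> S" unfolding S_def by (intro Max_in) auto
    then have "Max S < e / 4" using y unfolding S_def by auto
    moreover have "dist y q \<le> 2 * Max S + (1/2) ^ N"
      unfolding S_def by (rule dist_fun_le_dist_first_terms)
    ultimately show "y \<in> U" using N e(2) by simp
  qed
  then show ?thesis using that[of "e/4" "from_nat ` {..N}"] e by auto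
qed

lemma openin_nabla_coord_nbhd:
  assumes G: "openin (top_of_set (nabla r)) G" and qG: "q \<in> G"
  obtains e where "e > 0" "\<And>y. y \<in> nabla r \<Longrightarrow> (\<forall>i<r. \<bar>y i - q i\<bar> < e) \<Longrightarrow> y \<in> G"
proof -
  obtain U where U: "open U" "G = nabla r \<inter> U" using G by (auto simp: openin_open)
  then have q: "q \<in> nabla r" "q \<in> U" using qG by auto
  obtain e I where e: "e > 0" "\<And>y. (\<forall>i\<in>I. dist (y i) (q i) < e) \<Longrightarrow> y \<in> U"
    using open_fun_coord_nbhd[OF U(1) q(2)] by blast
  have "y \<in> G" if y: "y \<in> nabla r" "\<forall>i<r. \<bar>y i - q i\<bar> < e" for y
  proof -
    have "dist (y i) (q i) < e" for i
      using y q(1) e(1) by (cases "i < r") (auto simp: dist_real_def nabla_def)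
    then show ?thesis using e(2) y(1) U(2) by blast
  qed
  then show ?thesis using that e(1) by blast
qed

section \<open>Upper estimate\<close>

definition scatter :: "nat \<Rightarrow> (nat \<Rightarrow> nat) \<Rightarrow> (nat \<Rightarrow> real) \<Rightarrow> nat \<Rightarrow> real" where
  "scatter r j b k = (\<Sum>i<r. if j i = k then b i else 0)"

lemma scatter_nonneg: "(\<And>i. i < r \<Longrightarrow> 0 \<le> b i) \<Longrightarrow> 0 \<le> scatter r j b k"
  unfolding scatter_def by (intro sum_nonneg) auto

lemma scatter_at:
  assumes "inj_on j {..<r}" "i < r"
  shows "scatter r j b (j i) = b i"
proof -
  have "scatter r j b (j i) = (\<Sum>i'<r. if i' = i then b i' else 0)"
    unfolding scatter_def using assms by (intro sum.cong refl) (auto dest: inj_onD)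
  then show ?thesis using assms(2) by simp
qed

lemma sum_scatter:
  assumes "\<And>i. i < r \<Longrightarrow> j i < K"
  shows "(\<Sum>k<K. scatter r j b k) = (\<Sum>i<r. b i)"
proof -
  have "(\<Sum>k<K. scatter r j b k) = (\<Sum>i<r. \<Sum>k<K. if j i = k then b i else 0)"
    unfolding scatter_def by (rule sum.swap)
  also have "\<dots> = (\<Sum>i<r. b i)"
    using assms by (intro sum.cong refl) (simp add: eq_commute)
  finally show ?thesis .
qed

lemma measure_unif_simplex_orthant_scatter:
  assumes K: "K \<ge> 1" and j: "\<And>i. i < r \<Longrightarrow> j i < K"
    and b0: "\<And>i. i < r \<Longrightarrow> 0 \<le> b i" and b1: "(\<Sum>i<r. b i) < 1"
  shows "measure (unif_simplex K) (orthant K (scatter r j b)) = (1 - (\<Sum>i<r. b i)) ^ (K - 1)"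
  using measure_unif_simplex_orthant[OF K, of "scatter r j b"] sum_scatter[OF j, where b=b]
    scatter_nonneg[OF b0] b1 by simp

(* Rounding to \<lceil>y/d\<rceil> - 1 instead of \<lfloor>y/d\<rfloor> keeps d m strictly below y unless m = 0;
   this keeps grid sums below 1, where the orthant formula applies. *)
lemma grid_point_below:
  fixes y d :: real
  assumes d: "0 < d" and y: "0 \<le> y" "y \<le> 1"
  obtains m :: nat where "m \<le> nat \<lfloor>1 / d\<rfloor>" "y - d \<le> d * m" "d * m \<le> y" "m \<noteq> 0 \<longrightarrow> d * m < y"
proof
  define c where "c = \<lceil>y / d\<rceil>"
  have c: "real_of_int c - 1 < y / d" "y / d \<le> real_of_int c"
    unfolding c_def by linarith+
  then have c': "d * (real_of_int c - 1) < y" "y \<le> d * real_of_int c"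
    using d by (simp_all add: field_simps)
  have "real_of_int c - 1 \<le> real (nat (c - 1))" by linarith
  then have "d * (real_of_int c - 1) \<le> d * nat (c - 1)" using d by (intro mult_left_mono) auto
  then show "y - d \<le> d * nat (c - 1)" using c'(2) by (simp add: algebra_simps)
  have "real (nat (c - 1)) = (if 1 \<le> c then real_of_int c - 1 else 0)" by auto
  then show "d * nat (c - 1) \<le> y" "nat (c - 1) \<noteq> 0 \<longrightarrow> d * nat (c - 1) < y"
    using c'(1) y(1) by auto
  have "real_of_int (c - 1) < 1 / d"
    using c(1) y(2) d by (smt (verit) divide_right_mono of_int_diff of_int_1)
  then show "nat (c - 1) \<le> nat \<lfloor>1 / d\<rfloor>" by linarith
qed

lemma grid_vector_below:
  fixes y :: "nat \<Rightarrow> real"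
  assumes d: "0 < d" and y0: "\<And>i. i < r \<Longrightarrow> 0 \<le> y i" and y1: "(\<Sum>i<r. y i) \<le> 1"
  obtains m where "m \<in> {..<r} \<rightarrow>\<^sub>E {..nat \<lfloor>1 / d\<rfloor>}" "\<And>i. i < r \<Longrightarrow> d * m i \<le> y i"
    "(\<Sum>i<r. y i) - r * d \<le> (\<Sum>i<r. d * m i)" "(\<Sum>i<r. d * m i) < 1"
proof -
  have "\<forall>i\<in>{..<r}. \<exists>m. m \<le> nat \<lfloor>1 / d\<rfloor> \<and> y i - d \<le> d * m \<and> d * m \<le> y i \<and>
      (m \<noteq> 0 \<longrightarrow> d * m < y i)" (is "\<forall>i\<in>_. \<exists>m. ?grid i m")
  proof
    fix i assume i: "i \<in> {..<r}"
    have "0 \<le> y i" "y i \<le> 1" using member_le_sum[of i "{..<r}" y] y0 y1 i by auto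
    then obtain m where "m \<le> nat \<lfloor>1 / d\<rfloor>" "y i - d \<le> d * m" "d * m \<le> y i" "m \<noteq> 0 \<longrightarrow> d * m < y i"
      by (rule grid_point_below[OF d])
    then show "\<exists>m. ?grid i m" by blast
  qed
  then obtain M where "\<forall>i\<in>{..<r}. ?grid i (M i)" by (rule bchoice[THEN exE])
  then have M: "\<And>i. i < r \<Longrightarrow> ?grid i (M i)" by simp
  define m where "m = restrict M {..<r}"
  have "(\<Sum>i<r. y i) - r * d = (\<Sum>i<r. y i - d)" by (simp add: sum_subtractf)
  also have "\<dots> \<le> (\<Sum>i<r. d * m i)" using M by (intro sum_mono) (simp add: m_def)
  finally have lower: "(\<Sum>i<r. y i) - r * d \<le> (\<Sum>i<r. d * m i)" .
  have "(\<Sum>i<r. d * m i) < 1"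
  proof (cases "\<forall>i<r. m i = 0")
    case False
    then have "(\<Sum>i<r. d * m i) < (\<Sum>i<r. y i)"
      using M by (intro sum_strict_mono_ex1) (auto simp: m_def)
    then show ?thesis using y1 by simp
  qed simp
  show ?thesis
  proof (rule that)
    show "m \<in> {..<r} \<rightarrow>\<^sub>E {..nat \<lfloor>1 / d\<rfloor>}" using M by (auto simp: m_def)
    show "d * m i \<le> y i" if "i < r" for i using M that by (simp add: m_def)
  qed fact+
qed

lemma prob_simplex_grid_cover:
  assumes r: "1 \<le> r" and rK: "r \<le> K" and d: "0 < d" and x: "x \<in> prob_simplex K"
  obtains j m where "j \<in> {..<r} \<rightarrow>\<^sub>E {..<K}" "m \<in> {..<r} \<rightarrow>\<^sub>E {..nat \<lfloor>1 / d\<rfloor>}"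
    "(\<Sum>i<r. top_stats r K x i) - r * d \<le> (\<Sum>i<r. d * m i)" "(\<Sum>i<r. d * m i) < 1"
    "x \<in> orthant K (scatter r j (\<lambda>i. d * m i))"
proof -
  obtain p where p: "p permutes {..<K}" "\<And>i. i < K \<Longrightarrow> rev (sort (map x [0..<K])) ! i = x (p i)"
    using top_stats_permutes[of K x] by blast
  have pK: "\<And>i. i < K \<Longrightarrow> p i < K" using permutes_in_image[OF p(1)] by simp
  have x0: "\<And>k. k < K \<Longrightarrow> 0 \<le> x k" using x by (simp add: prob_simplex_def)
  have top: "top_stats r K x i = x (p i)" if "i < r" for i
    using p(2) rK that by (simp add: top_stats_def)
  have "(\<Sum>i<r. x (p i)) \<le> 1"
    using top_stats_in_nabla[OF r rK x] by (simp add: nabla_def top)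
  then obtain m where m: "m \<in> {..<r} \<rightarrow>\<^sub>E {..nat \<lfloor>1 / d\<rfloor>}" "\<And>i. i < r \<Longrightarrow> d * m i \<le> x (p i)"
    "(\<Sum>i<r. x (p i)) - r * d \<le> (\<Sum>i<r. d * m i)" "(\<Sum>i<r. d * m i) < 1"
    using grid_vector_below[OF d, of r "\<lambda>i. x (p i)"] x0 pK rK by auto
  define j where "j = restrict p {..<r}"
  have inj: "inj_on j {..<r}"
    using permutes_inj[OF p(1)] unfolding j_def by (auto simp: inj_on_def)
  have "scatter r j (\<lambda>i. d * m i) k \<le> x k" if k: "k < K" for k
  proof (cases "\<exists>i<r. j i = k")
    case True
    then obtain i where i: "i < r" "j i = k" by blast
    then show ?thesis using scatter_at[OF inj i(1)] m(2) by (auto simp: j_def)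
  qed (simp add: scatter_def x0 k)
  then have "x \<in> orthant K (scatter r j (\<lambda>i. d * m i))"
    using x by (simp add: orthant_def prob_simplex_def)
  moreover have "j \<in> {..<r} \<rightarrow>\<^sub>E {..<K}" using pK rK by (auto simp: j_def)
  ultimately show ?thesis using that m by (simp add: top)
qed

definition grid_index :: "nat \<Rightarrow> nat \<Rightarrow> real \<Rightarrow> real \<Rightarrow> ((nat \<Rightarrow> nat) \<times> (nat \<Rightarrow> nat)) set" where
  "grid_index r K d c = {(j, m) \<in> ({..<r} \<rightarrow>\<^sub>E {..<K}) \<times> ({..<r} \<rightarrow>\<^sub>E {..nat \<lfloor>1 / d\<rfloor>}).
     c - real r * d \<le> (\<Sum>i<r. d * real (m i)) \<and> (\<Sum>i<r. d * real (m i)) < 1}"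

lemma finite_grid_index: "finite (grid_index r K d c)"
  by (rule finite_subset[of _ "({..<r} \<rightarrow>\<^sub>E {..<K}) \<times> ({..<r} \<rightarrow>\<^sub>E {..nat \<lfloor>1 / d\<rfloor>})"])
     (auto simp: grid_index_def intro!: finite_PiE)

lemma card_grid_index_le: "card (grid_index r K d c) \<le> (nat \<lfloor>1 / d\<rfloor> + 1) ^ r * K ^ r"
proof -
  have "card (grid_index r K d c) \<le> card (({..<r} \<rightarrow>\<^sub>E {..<K}) \<times> ({..<r} \<rightarrow>\<^sub>E {..nat \<lfloor>1 / d\<rfloor>}))"
    by (intro card_mono) (auto simp: grid_index_def intro!: finite_PiE)
  then show ?thesis by (simp add: card_cartesian_product card_PiE mult.commute)
qed

lemma measure_grid_orthant_le:
  fixes d :: real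
  assumes K: "K \<ge> 1" and jm: "(j, m) \<in> grid_index r K d c" and d: "0 < d"
  shows "measure (unif_simplex K) (orthant K (scatter r j (\<lambda>i. d * m i))) \<le> (1 - c + r * d) ^ (K - 1)"
proof -
  have j: "\<And>i. i < r \<Longrightarrow> j i < K" and s: "c - r * d \<le> (\<Sum>i<r. d * m i)" "(\<Sum>i<r. d * m i) < 1"
    using jm by (auto simp: grid_index_def)
  then have "measure (unif_simplex K) (orthant K (scatter r j (\<lambda>i. d * m i))) = (1 - (\<Sum>i<r. d * m i)) ^ (K - 1)"
    using measure_unif_simplex_orthant_scatter[OF K j _ s(2)] d by simp
  also have "\<dots> \<le> (1 - c + r * d) ^ (K - 1)" using s by (intro power_mono) auto
  finally show ?thesis .
qed

lemma top_stats_vimage_subset_grid_orthants: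
  fixes d :: real
  assumes r: "1 \<le> r" and rK: "r \<le> K" and d: "0 < d" and Fc: "\<And>q. q \<in> F \<Longrightarrow> c \<le> (\<Sum>i<r. q i)"
  shows "top_stats r K -` F \<inter> prob_simplex K \<subseteq>
    (\<Union>(j, m)\<in>grid_index r K d c. orthant K (scatter r j (\<lambda>i. d * m i)))"
proof
  fix x assume x: "x \<in> top_stats r K -` F \<inter> prob_simplex K"
  then obtain j m where "j \<in> {..<r} \<rightarrow>\<^sub>E {..<K}" "m \<in> {..<r} \<rightarrow>\<^sub>E {..nat \<lfloor>1 / d\<rfloor>}"
    "(\<Sum>i<r. top_stats r K x i) - r * d \<le> (\<Sum>i<r. d * m i)" "(\<Sum>i<r. d * m i) < 1"
    "x \<in> orthant K (scatter r j (\<lambda>i. d * m i))"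
    using prob_simplex_grid_cover[OF r rK d] by auto
  moreover have "c \<le> (\<Sum>i<r. top_stats r K x i)" using Fc x by simp
  ultimately have "(j, m) \<in> grid_index r K d c" "x \<in> orthant K (scatter r j (\<lambda>i. d * m i))"
    by (auto simp: grid_index_def)
  then show "x \<in> (\<Union>(j, m)\<in>grid_index r K d c. orthant K (scatter r j (\<lambda>i. d * m i)))"
    by (intro UN_I[of "(j, m)"]) simp_all
qed

lemma measure_law_top_le:
  assumes r: "1 \<le> r" and rK: "r \<le> K" and F: "F \<in> sets borel"
    and Fc: "\<And>q. q \<in> F \<Longrightarrow> c \<le> (\<Sum>i<r. q i)" and d: "0 < d" and b: "0 \<le> 1 - c + r * d"
  shows "measure (law_top r K) F \<le> real (nat \<lfloor>1 / d\<rfloor> + 1) ^ r * real K ^ r * (1 - c + r * d) ^ (K - 1)"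
proof -
  have K: "K \<ge> 1" using r rK by simp
  interpret P: prob_space "unif_simplex K" by (rule prob_space_unif_simplex[OF K])
  let ?G = "grid_index r K d c" and ?B = "(1 - c + r * d) ^ (K - 1)"
    and ?O = "\<lambda>(j, m). orthant K (scatter r j (\<lambda>i. d * real (m i)))"
  have "measure (law_top r K) F \<le> measure (unif_simplex K) (\<Union>t\<in>?G. ?O t)"
    unfolding measure_law_top[OF rK F] using top_stats_vimage_subset_grid_orthants[OF r rK d Fc]
    by (intro measure_unif_simplex_mono[OF K]) (auto simp: finite_grid_index sets_orthant)
  also have "\<dots> \<le> (\<Sum>t\<in>?G. measure (unif_simplex K) (?O t))"
    by (intro P.finite_measure_subadditive_finite) (auto simp: finite_grid_index sets_orthant)
  also have "\<dots> \<le> card ?G * ?B"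
  proof (rule sum_bounded_above)
    fix t assume "t \<in> ?G"
    then show "measure (unif_simplex K) (?O t) \<le> ?B"
      using measure_grid_orthant_le[OF K _ d] by (cases t) auto
  qed
  also have "\<dots> \<le> real ((nat \<lfloor>1 / d\<rfloor> + 1) ^ r * K ^ r) * ?B"
    using card_grid_index_le b by (intro mult_right_mono) (simp_all only: of_nat_le_iff zero_le_power)
  finally show ?thesis by simp
qed

section \<open>Lower estimate\<close>

definition cell :: "nat \<Rightarrow> (nat \<Rightarrow> real) \<Rightarrow> real \<Rightarrow> (nat \<Rightarrow> real) set" where
  "cell K a d = {x \<in> space (lborelPi K). \<forall>k<K. a k \<le> x k \<and> x k < a k + d}"

lemma measure_unif_simplex_cell_ge:
  assumes K: "K \<ge> 1" and a0: "\<And>k. k < K \<Longrightarrow> 0 \<le> a k" and d: "0 < d" "(\<Sum>k<K. a k) + d < 1"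
  shows "(1 - (\<Sum>k<K. a k)) ^ (K - 1) - real K * (1 - (\<Sum>k<K. a k) - d) ^ (K - 1)
           \<le> measure (unif_simplex K) (cell K a d)"
proof -
  interpret P: prob_space "unif_simplex K" by (rule prob_space_unif_simplex[OF K])
  define bump where "bump k = (\<lambda>i. a i + (if i = k then d else 0))" for k
  have sets_cell: "cell K a d \<in> sets (lborelPi K)" unfolding cell_def by measurable
  have "orthant K a \<subseteq> cell K a d \<union> (\<Union>k<K. orthant K (bump k))"
  proof
    fix x assume x: "x \<in> orthant K a"
    show "x \<in> cell K a d \<union> (\<Union>k<K. orthant K (bump k))"
    proof (cases "\<exists>k<K. a k + d \<le> x k")
      case True
      then obtain k where "k < K" "a k + d \<le> x k" by blast
      then have "x \<in> orthant K (bump k)" using x by (auto simp: orthant_def bump_def)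
      then show ?thesis using \<open>k < K\<close> by blast
    qed (use x in \<open>auto simp: orthant_def cell_def not_le\<close>)
  qed
  then have "measure (unif_simplex K) (orthant K a) \<le>
      measure (unif_simplex K) (cell K a d \<union> (\<Union>k<K. orthant K (bump k)))"
    using sets_cell sets_orthant by (intro P.finite_measure_mono) auto
  also have "\<dots> \<le> measure (unif_simplex K) (cell K a d) + measure (unif_simplex K) (\<Union>k<K. orthant K (bump k))"
    using sets_cell sets_orthant by (intro measure_subadditive) (auto simp: P.emeasure_finite)
  also have "measure (unif_simplex K) (\<Union>k<K. orthant K (bump k)) \<le>
      (\<Sum>k<K. measure (unif_simplex K) (orthant K (bump k)))"
    using sets_orthant by (intro P.finite_measure_subadditive_finite) auto
  also have "\<dots> = real K * (1 - (\<Sum>k<K. a k) - d) ^ (K - 1)"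
  proof -
    have "(\<Sum>i<K. bump k i) = (\<Sum>i<K. a i) + d" if "k < K" for k
      using that by (simp add: bump_def sum.distrib)
    then show ?thesis
      using measure_unif_simplex_orthant[OF K] a0 d by (simp add: bump_def diff_diff_eq)
  qed
  finally show ?thesis using measure_unif_simplex_orthant[OF K a0] d by simp
qed

lemma top_stats_cell:
  assumes q: "q \<in> nabla r" and rK: "r \<le> K" and x: "x \<in> cell K q d" and i: "i < r"
  shows "\<bar>top_stats r K x i - q i\<bar> \<le> d"
proof -
  have close: "\<bar>map x [0..<K] ! k - map q [0..<K] ! k\<bar> \<le> d" if "k < K" for k
    using x that by (auto simp: cell_def)
  have "rev (sort (map x [0..<K])) ! i \<le> rev (sort (map q [0..<K])) ! i + d"
    using i rK close by (intro rev_sort_nth_le_add) auto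
  moreover have "rev (sort (map q [0..<K])) ! i \<le> rev (sort (map x [0..<K])) ! i + d"
    using i rK close by (intro rev_sort_nth_le_add) (auto simp: abs_minus_commute)
  ultimately show ?thesis
    using rev_sort_map_nabla[OF q rK] i rK by (auto simp: top_stats_def)
qed

lemma measure_law_top_ge:
  assumes r: "1 \<le> r" and rK: "r \<le> K" and G: "G \<in> sets borel" and q: "q \<in> nabla r"
    and near: "\<And>y. y \<in> nabla r \<Longrightarrow> (\<forall>i<r. \<bar>y i - q i\<bar> \<le> d) \<Longrightarrow> y \<in> G"
    and d: "0 < d" "(\<Sum>i<r. q i) + d < 1"
  shows "(1 - (\<Sum>i<r. q i)) ^ (K - 1) - real K * (1 - (\<Sum>i<r. q i) - d) ^ (K - 1)
           \<le> measure (law_top r K) G"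
proof -
  have K: "K \<ge> 1" using r rK by simp
  have "(\<Sum>k<K. q k) = (\<Sum>i<r. q i)"
    using q rK by (intro sum.mono_neutral_right) (auto simp: nabla_def)
  then have "(1 - (\<Sum>i<r. q i)) ^ (K - 1) - real K * (1 - (\<Sum>i<r. q i) - d) ^ (K - 1)
      \<le> measure (unif_simplex K) (cell K q d)"
    using measure_unif_simplex_cell_ge[of K q d] K nabla_nonneg[OF q] d by simp
  also have "\<dots> \<le> measure (unif_simplex K) (top_stats r K -` G \<inter> space (lborelPi K))"
  proof (intro measure_unif_simplex_mono[OF K])
    show "cell K q d \<inter> prob_simplex K \<subseteq> top_stats r K -` G \<inter> space (lborelPi K)"
      using near top_stats_in_nabla[OF r rK] top_stats_cell[OF q rK] by (auto simp: cell_def)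
    show "top_stats r K -` G \<inter> space (lborelPi K) \<in> sets (lborelPi K)"
      using measurable_sets[OF measurable_top_stats[OF rK] G] .
  qed
  finally show ?thesis using measure_law_top[OF rK G] by simp
qed

section \<open>Exponential rates\<close>

lemma limsup_scaled_elog_le:
  fixes P :: "nat \<Rightarrow> real"
  assumes C: "C > 0" and b: "b > 0"
    and bound: "eventually (\<lambda>K. P K \<le> C * real K ^ r * b ^ (K - 1)) sequentially"
  shows "limsup (\<lambda>K. ereal (1 / real K) * elog (P K)) \<le> ereal (ln b)"
proof -
  define g where "g K = ln C / real K + real r * (ln (real K) / real K) + ln b * ((real K - 1) / real K)"
    for K :: nat
  have "eventually (\<lambda>K. ereal (1 / real K) * elog (P K) \<le> ereal (g K)) sequentially"
    using bound eventually_ge_at_top[of 1]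
  proof eventually_elim
    case (elim K)
    show ?case
    proof (cases "P K > 0")
      case True
      have "ln (P K) \<le> ln (C * real K ^ r * b ^ (K - 1))"
        using True elim by (subst ln_le_cancel_iff) auto
      also have "\<dots> = ln C + real r * ln (real K) + real (K - 1) * ln b"
        using C b elim by (simp add: ln_mult ln_realpow)
      finally have "ln (P K) / real K \<le> (ln C + real r * ln (real K) + real (K - 1) * ln b) / real K"
        using elim by (intro divide_right_mono) auto
      also have "\<dots> = g K" using elim by (simp add: g_def add_divide_distrib of_nat_diff)
      finally show ?thesis using True by (simp add: elog_def)
    qed (use elim in \<open>simp add: elog_def\<close>)
  qed
  then have "limsup (\<lambda>K. ereal (1 / real K) * elog (P K)) \<le> limsup (\<lambda>K. ereal (g K))"
    by (rule Limsup_mono)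
  also have "\<dots> = ereal (ln b)"
    unfolding g_def by (intro lim_imp_Limsup tendsto_ereal) (simp_all, real_asymp)
  finally show ?thesis .
qed

lemma liminf_scaled_elog_ge:
  fixes P :: "nat \<Rightarrow> real"
  assumes C: "C > 0" and b: "b > 0"
    and bound: "eventually (\<lambda>K. C * b ^ (K - 1) \<le> P K) sequentially"
  shows "ereal (ln b) \<le> liminf (\<lambda>K. ereal (1 / real K) * elog (P K))"
proof -
  define g where "g K = ln C / real K + ln b * ((real K - 1) / real K)" for K :: nat
  have "eventually (\<lambda>K. ereal (g K) \<le> ereal (1 / real K) * elog (P K)) sequentially"
    using bound eventually_ge_at_top[of 1]
  proof eventually_elim
    case (elim K)
    have pos: "0 < C * b ^ (K - 1)" using C b by simp
    have "ln C + real (K - 1) * ln b = ln (C * b ^ (K - 1))"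
      using C b by (simp add: ln_mult ln_realpow)
    also have "\<dots> \<le> ln (P K)"
      using pos elim by (subst ln_le_cancel_iff) auto
    finally have "ln C + real (K - 1) * ln b \<le> ln (P K)" .
    have "g K = (ln C + real (K - 1) * ln b) / real K"
      using elim by (simp add: g_def field_simps of_nat_diff)
    also have "\<dots> \<le> ln (P K) / real K"
      using \<open>ln C + real (K - 1) * ln b \<le> ln (P K)\<close> by (intro divide_right_mono) auto
    finally have "g K \<le> ln (P K) / real K" .
    then show ?case using pos elim by (simp add: elog_def)
  qed
  then have "liminf (\<lambda>K. ereal (g K)) \<le> liminf (\<lambda>K. ereal (1 / real K) * elog (P K))"
    by (rule Liminf_mono)
  moreover have "liminf (\<lambda>K. ereal (g K)) = ereal (ln b)"
    unfolding g_def by (intro lim_imp_Liminf tendsto_ereal) (simp_all, real_asymp)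
  ultimately show ?thesis by simp
qed

lemma tendsto_of_nat_times_power_pred:
  fixes \<rho> :: real
  assumes "0 < \<rho>" "\<rho> < 1"
  shows "(\<lambda>K. real K * \<rho> ^ (K - 1)) \<longlonglongrightarrow> 0"
proof -
  have "(\<lambda>K. real K * \<rho> ^ K / \<rho>) \<longlonglongrightarrow> 0 / \<rho>"
    using assms by (intro tendsto_divide powser_times_n_limit_0) auto
  moreover have "real K * \<rho> ^ K / \<rho> = real K * \<rho> ^ (K - 1)" for K
    using assms by (cases K) auto
  ultimately show ?thesis by simp
qed

section \<open>The large deviation bounds\<close>

lemma rate_less_1: "(\<Sum>k<r. q k) < 1 \<Longrightarrow> rate r q = ereal (- ln (1 - (\<Sum>k<r. q k)))"
  by (simp add: rate_def ln_div)

lemma limsup_law_top_le: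
  assumes r: "1 \<le> r" and F: "F \<in> sets borel" and Fc: "\<And>q. q \<in> F \<Longrightarrow> c \<le> (\<Sum>i<r. q i)"
    and b: "0 < 1 - c" "1 - c < b"
  shows "limsup (\<lambda>K. ereal (1 / real K) * elog (measure (law_top r K) F)) \<le> ereal (ln b)"
proof -
  define d where "d = (b - (1 - c)) / r"
  have d: "0 < d" and bd: "1 - c + r * d = b" using b r by (auto simp: d_def)
  have "eventually (\<lambda>K. measure (law_top r K) F \<le> real (nat \<lfloor>1 / d\<rfloor> + 1) ^ r * real K ^ r * b ^ (K - 1))
      sequentially"
    using eventually_ge_at_top[of r]
    by eventually_elim (use measure_law_top_le[OF r _ F Fc d] bd b in auto)
  then show ?thesis using b by (intro limsup_scaled_elog_le) auto
qed

lemma law_top_closed_bound: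
  assumes r: "1 \<le> r" and F: "closedin (top_of_set (nabla r)) F"
  shows "limsup (\<lambda>K. ereal (1 / real K) * elog (measure (law_top r K) F)) \<le> - (INF q\<in>F. rate r q)"
proof (rule ereal_le_real)
  fix z assume z: "- (INF q\<in>F. rate r q) \<le> ereal z"
  have F_borel: "F \<in> sets borel" using closedin_closed_trans[OF F closed_nabla] by simp
  have Fc: "1 - exp z \<le> (\<Sum>i<r. q i)" if q: "q \<in> F" for q
  proof (cases "(\<Sum>i<r. q i) < 1")
    case True
    have "- rate r q \<le> - (INF q\<in>F. rate r q)" using q by (simp add: INF_lower)
    then have "- rate r q \<le> ereal z" using z by (rule order_trans)
    then have "ln (1 - (\<Sum>i<r. q i)) \<le> z" using True by (simp add: rate_less_1)
    then show ?thesis using True exp_le_cancel_iff[of "ln (1 - (\<Sum>i<r. q i))" z] by simp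
  qed (use exp_gt_zero[of z] in linarith)
  show "limsup (\<lambda>K. ereal (1 / real K) * elog (measure (law_top r K) F)) \<le> ereal z"
  proof (rule ereal_le_epsilon2)
    fix e :: real assume "0 < e"
    then have "limsup (\<lambda>K. ereal (1 / real K) * elog (measure (law_top r K) F)) \<le> ereal (ln (exp (z + e)))"
      by (intro limsup_law_top_le[OF r F_borel Fc]) auto
    then show "limsup (\<lambda>K. ereal (1 / real K) * elog (measure (law_top r K) F)) \<le> ereal z + ereal e"
      by simp
  qed
qed

lemma liminf_law_top_ge:
  assumes r: "1 \<le> r" and G: "G \<in> sets borel" and q: "q \<in> nabla r" and s: "(\<Sum>i<r. q i) < 1"
    and e: "0 < e" and near: "\<And>y. y \<in> nabla r \<Longrightarrow> (\<forall>i<r. \<bar>y i - q i\<bar> < e) \<Longrightarrow> y \<in> G"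
  shows "ereal (ln (1 - (\<Sum>i<r. q i))) \<le> liminf (\<lambda>K. ereal (1 / real K) * elog (measure (law_top r K) G))"
proof -
  define b where "b = 1 - (\<Sum>i<r. q i)"
  define d where "d = min (e / 2) (b / 2)"
  have b: "0 < b" using s by (simp add: b_def)
  have d: "0 < d" "d < e" "d < b" using e b by (auto simp: d_def)
  define \<rho> where "\<rho> = (b - d) / b"
  have \<rho>: "0 < \<rho>" "\<rho> < 1" using b d by (auto simp: \<rho>_def)
  have "eventually (\<lambda>K. real K * \<rho> ^ (K - 1) < 1 / 2) sequentially"
    by (rule order_tendstoD(2)[OF tendsto_of_nat_times_power_pred[OF \<rho>]]) simp
  then have ev: "eventually (\<lambda>K. 1 / 2 * b ^ (K - 1) \<le> measure (law_top r K) G) sequentially"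
    using eventually_ge_at_top[of r]
  proof eventually_elim
    case (elim K)
    have "b ^ (K - 1) - real K * (b - d) ^ (K - 1) \<le> measure (law_top r K) G"
      using measure_law_top_ge[OF r elim(2) G q, of d] near d by (force simp: b_def)
    moreover have "real K * (b - d) ^ (K - 1) = (real K * \<rho> ^ (K - 1)) * b ^ (K - 1)"
      using b by (simp add: \<rho>_def power_divide)
    moreover have "(real K * \<rho> ^ (K - 1)) * b ^ (K - 1) \<le> 1 / 2 * b ^ (K - 1)"
      using elim(1) b by (intro mult_right_mono) auto
    ultimately show ?case by linarith
  qed
  show ?thesis unfolding b_def[symmetric] by (rule liminf_scaled_elog_ge[OF _ b ev]) simp
qed

lemma law_top_open_bound:
  assumes r: "1 \<le> r" and G: "openin (top_of_set (nabla r)) G"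
  shows "- (INF q\<in>G. rate r q) \<le> liminf (\<lambda>K. ereal (1 / real K) * elog (measure (law_top r K) G))"
proof -
  obtain U where "open U" "G = nabla r \<inter> U" using G by (auto simp: openin_open)
  then have G_borel: "G \<in> sets borel" using closed_nabla by auto
  have "- liminf (\<lambda>K. ereal (1 / real K) * elog (measure (law_top r K) G)) \<le> rate r q"
    if q: "q \<in> G" for q
  proof (cases "(\<Sum>i<r. q i) < 1")
    case True
    obtain e where "0 < e" "\<And>y. y \<in> nabla r \<Longrightarrow> (\<forall>i<r. \<bar>y i - q i\<bar> < e) \<Longrightarrow> y \<in> G"
      using openin_nabla_coord_nbhd[OF G q] by blast
    moreover have "q \<in> nabla r" using openin_imp_subset[OF G] q by blast
    ultimately have "ereal (ln (1 - (\<Sum>i<r. q i)))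
        \<le> liminf (\<lambda>K. ereal (1 / real K) * elog (measure (law_top r K) G))"
      using liminf_law_top_ge[OF r G_borel _ True] by blast
    then show ?thesis using True by (simp add: rate_less_1 ereal_uminus_le_reorder)
  qed (simp add: rate_def)
  then have "- liminf (\<lambda>K. ereal (1 / real K) * elog (measure (law_top r K) G)) \<le> (INF q\<in>G. rate r q)"
    by (rule INF_greatest)
  then show ?thesis by (simp add: ereal_uminus_le_reorder)
qed

theorem theorem2p6:
  fixes r :: nat
  assumes "r \<ge> 1"
  shows "LDP (nabla r) (law_top r) (\<lambda>K. real K) (rate r)"
  unfolding LDP_def using law_top_closed_bound[OF assms] law_top_open_bound[OF assms] by blast

end
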